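(* Let $b,c_1,c_2$ be positive integers, let $\alpha/\beta$ be the right lobster $\mathcal{L}^{c_1,c_2}_b$, and let $T$ be a minimal element of $\mathrm{SET}(\alpha/\beta)$. Then for every column of $\alpha/\beta$, the set of entries of $T$ in the cells of that column is an interval of consecutive integers.
   Context: Rows are numbered from the bottom. The right lobster $\mathcal{L}^{c_1,c_2}_b$ is the skew diagram $\alpha/\beta$ with $\alpha=(b+1+c_2,b+1,b+1+c_1)$, $\beta=(b+1,1,b+1)$: a bottom row of $c_2$ cells in columns $b+2,\ldots,b+1+c_2$, a middle row of $b$ cells in columns $2,\ldots,b+1$, and a top row of $c_1$ cells in columns $b+2,\ldots,b+1+c_1$. $\mathrm{SET}(\alpha/\beta)$ is the set of bijective fillings with $1,\ldots,N$ ($N=b+c_1+c_2$) whose rows increase left to right and columns increase bottom to top. For $1\le i\le N-1$, $\pi_i(T)=T$ if $i+1$ is in a strictly higher row than $i$, $\pi_i(T)=s_i(T)$ (swap $i$ and $i+1$) if $i+1$ is in a strictly lower row than $i$, and $\pi_i(T)=0$ otherwise; the poset order is $T\le T'$ iff $T'$ is obtained from $T$ by a sequence of operators $\pi_i$ (all intermediate results nonzero); minimal elements are those with no strictly smaller element. *)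

theory Defs
  imports Main
begin

text \<open>Cells are pairs (row, column); rows are numbered from the bottom (row 1 = bottom).\<close>
type_synonym cell = "nat \<times> nat"
type_synonym filling = "cell \<Rightarrow> nat"

definition lobster_cells :: "nat \<Rightarrow> nat \<Rightarrow> nat \<Rightarrow> cell set" where
  "lobster_cells b c1 c2 =
     {(1, j) | j. b + 2 \<le> j \<and> j \<le> b + 1 + c2} \<union>
     {(2, j) | j. 2 \<le> j \<and> j \<le> b + 1} \<union>
     {(3, j) | j. b + 2 \<le> j \<and> j \<le> b + 1 + c1}"

text \<open>Values outside D are fixed to 0
  so that a filling is determined by its values on D.\<close>
definition SET :: "cell set \<Rightarrow> filling set" where
  "SET D = {T. bij_betw T D {1..card D} \<and> (\<forall>c. c \<notin> D \<longrightarrow> T c = 0) \<and>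
     (\<forall>r j j'. (r, j) \<in> D \<longrightarrow> (r, j') \<in> D \<longrightarrow> j < j' \<longrightarrow> T (r, j) < T (r, j')) \<and>
     (\<forall>r r' j. (r, j) \<in> D \<longrightarrow> (r', j) \<in> D \<longrightarrow> r < r' \<longrightarrow> T (r, j) < T (r', j))}"

definition row_of :: "cell set \<Rightarrow> filling \<Rightarrow> nat \<Rightarrow> nat" where
  "row_of D T k = fst (THE c. c \<in> D \<and> T c = k)"

definition swap_entries :: "nat \<Rightarrow> filling \<Rightarrow> filling" where
  "swap_entries i T = (\<lambda>c. if T c = i then i + 1 else if T c = i + 1 then i else T c)"

text \<open>The operator pi_i; None stands for the result 0.\<close>
definition pi_op :: "cell set \<Rightarrow> nat \<Rightarrow> filling \<Rightarrow> filling option" where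
  "pi_op D i T =
     (if row_of D T i < row_of D T (i + 1) then Some T
      else if row_of D T (i + 1) < row_of D T i then Some (swap_entries i T)
      else None)"

definition pi_step :: "cell set \<Rightarrow> filling \<Rightarrow> filling \<Rightarrow> bool" where
  "pi_step D T T' \<longleftrightarrow> (\<exists>i. 1 \<le> i \<and> i + 1 \<le> card D \<and> pi_op D i T = Some T')"

definition pi_le :: "cell set \<Rightarrow> filling \<Rightarrow> filling \<Rightarrow> bool" where
  "pi_le D T T' \<longleftrightarrow> (pi_step D)\<^sup>*\<^sup>* T T'"

definition minimal_SET :: "cell set \<Rightarrow> filling \<Rightarrow> bool" where
  "minimal_SET D T \<longleftrightarrow> T \<in> SET D \<and>
     \<not> (\<exists>T' \<in> SET D. pi_le D T' T \<and> T' \<noteq> T)"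

end

theory Submission
  imports Defs "HOL-Combinatorics.Transposition"
begin

text \<open>If in a standard filling \<open>T\<close> the entry \<open>i\<close> sits strictly below \<open>i + 1\<close> and in a
  different column, then swapping \<open>i\<close> and \<open>i + 1\<close> gives another standard filling \<open>S\<close> with
  \<open>\<pi>\<^sub>i S = T\<close>, so \<open>T\<close> is not minimal. Hence in a minimal filling every ascent \<open>i, i + 1\<close>
  between rows lies inside one column. In the right lobster the only columns with two cells
  have their cells in rows 1 and 3; reading the rows of the entries \<open>T (1, j), \<dots>, T (3, j)\<close>
  there must be an ascent, and row monotonicity pins it to column \<open>j\<close> itself, which forces
  \<open>T (3, j) = T (1, j) + 1\<close>.\<close>

lemma swap_entries_eq_transpose: "swap_entries i T = Transposition.transpose i (Suc i) \<circ> T"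
  by (auto simp: swap_entries_def Transposition.transpose_def)

lemma swap_entries_involutory: "swap_entries i (swap_entries i T) = T"
  by (simp add: swap_entries_eq_transpose comp_assoc[symmetric])

lemma transpose_Suc_less:
  assumes "u < v" and "\<not> (u = i \<and> v = Suc i)"
  shows "Transposition.transpose i (Suc i) u < Transposition.transpose i (Suc i) v"
  using assms by (auto simp: Transposition.transpose_def)

lemma SET_image: "T \<in> SET D \<Longrightarrow> T ` D = {1..card D}"
  unfolding SET_def by (blast dest: bij_betw_imp_surj_on)

lemma SET_inj_on: "T \<in> SET D \<Longrightarrow> inj_on T D"
  unfolding SET_def by (blast dest: bij_betw_imp_inj_on)

lemma SET_row_less:
  "T \<in> SET D \<Longrightarrow> (r, j) \<in> D \<Longrightarrow> (r, j') \<in> D \<Longrightarrow> j < j' \<Longrightarrow> T (r, j) < T (r, j')"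
  unfolding SET_def by blast

lemma SET_column_less:
  "T \<in> SET D \<Longrightarrow> (r, j) \<in> D \<Longrightarrow> (r', j) \<in> D \<Longrightarrow> r < r' \<Longrightarrow> T (r, j) < T (r', j)"
  unfolding SET_def by blast

lemma row_of_SET:
  assumes "T \<in> SET D" and "c \<in> D"
  shows "row_of D T (T c) = fst c"
proof -
  have "(THE c'. c' \<in> D \<and> T c' = T c) = c"
    using assms SET_inj_on[OF assms(1)] by (auto simp: inj_on_def)
  then show ?thesis
    unfolding row_of_def by simp
qed

lemma swap_entries_in_SET:
  assumes T: "T \<in> SET D" and "x \<in> D" "y \<in> D" and "T x = i" "T y = Suc i"
    and "fst x \<noteq> fst y" and "snd x \<noteq> snd y"
  shows "swap_entries i T \<in> SET D"
proof -
  let ?\<tau> = "Transposition.transpose i (Suc i)"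
  have range: "i \<in> {1..card D}" "Suc i \<in> {1..card D}"
    using assms(2-5) SET_image[OF T] by (metis imageI)+
  have no_pair: "\<not> (T p = i \<and> T q = Suc i)"
    if "p \<in> D" "q \<in> D" "fst p = fst q \<or> snd p = snd q" for p q
    using that assms(2-7) inj_onD[OF SET_inj_on[OF T]] by metis
  have "bij_betw (?\<tau> \<circ> T) D {1..card D}"
    using T range unfolding SET_def by (auto intro: bij_betw_trans)
  moreover have "(?\<tau> \<circ> T) c = 0" if "c \<notin> D" for c
  proof -
    have "T c = 0"
      using T that unfolding SET_def by blast
    then show ?thesis
      using range by (simp add: Transposition.transpose_def)
  qed
  moreover have "(?\<tau> \<circ> T) (r, j) < (?\<tau> \<circ> T) (r, j')"
    if "(r, j) \<in> D" "(r, j') \<in> D" "j < j'" for r j j'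
    using that SET_row_less[OF T] no_pair[of "(r, j)" "(r, j')"] by (simp add: transpose_Suc_less)
  moreover have "(?\<tau> \<circ> T) (r, j) < (?\<tau> \<circ> T) (r', j)"
    if "(r, j) \<in> D" "(r', j) \<in> D" "r < r'" for r r' j
    using that SET_column_less[OF T] no_pair[of "(r, j)" "(r', j)"] by (simp add: transpose_Suc_less)
  ultimately show ?thesis
    unfolding SET_def swap_entries_eq_transpose by blast
qed

lemma minimal_SET_ascent_same_column:
  assumes min: "minimal_SET D T" and x: "x \<in> D" and y: "y \<in> D"
    and "T x = i" "T y = Suc i" and "fst x < fst y"
  shows "snd x = snd y"
proof (rule ccontr)
  assume "snd x \<noteq> snd y"
  define S where "S = swap_entries i T"
  have T: "T \<in> SET D"
    using min unfolding minimal_SET_def by blast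
  have S: "S \<in> SET D"
    unfolding S_def using swap_entries_in_SET[OF T x y] assms(4-6) \<open>snd x \<noteq> snd y\<close> by simp
  have "S x = Suc i" "S y = i"
    using assms(4,5) by (simp_all add: S_def swap_entries_def)
  then have "row_of D S i = fst y" "row_of D S (Suc i) = fst x"
    using row_of_SET[OF S x] row_of_SET[OF S y] by simp_all
  then have "pi_op D i S = Some T"
    using \<open>fst x < fst y\<close> by (simp add: pi_op_def S_def swap_entries_involutory)
  moreover have "1 \<le> i" "Suc i \<le> card D"
    using assms(4,5) x y SET_image[OF T] by (metis atLeastAtMost_iff imageI)+
  ultimately have "pi_le D S T"
    unfolding pi_le_def pi_step_def by auto
  moreover have "S \<noteq> T"
    using \<open>S x = Suc i\<close> \<open>T x = i\<close> by auto
  ultimately show False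
    using min S unfolding minimal_SET_def by blast
qed

lemma exists_ascent_between:
  fixes f :: "nat \<Rightarrow> 'a::linorder"
  assumes "a \<le> c" and "f a < f c"
  shows "\<exists>i. a \<le> i \<and> i < c \<and> f i < f (Suc i)"
  using assms
proof (induction c rule: dec_induct)
  case base
  then show ?case by simp
next
  case (step n)
  then show ?case
    by (metis le_refl lessI less_Suc_eq not_less order_less_le_trans)
qed

lemma lobster_column_cases:
  assumes "j \<in> snd ` lobster_cells b c1 c2"
  obtains p where "{c \<in> lobster_cells b c1 c2. snd c = j} = {p}"
  | "{c \<in> lobster_cells b c1 c2. snd c = j} = {(1, j), (3, j)}"
proof -
  have j: "2 \<le> j" "j \<le> b + 1 \<or> j \<le> b + 1 + c1 \<or> j \<le> b + 1 + c2"
    using assms unfolding lobster_cells_def by auto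
  consider "j \<le> b + 1" | "b + 2 \<le> j" "j \<le> b + 1 + c1" "j \<le> b + 1 + c2"
    | "b + 2 \<le> j" "j \<le> b + 1 + c1" "\<not> j \<le> b + 1 + c2"
    | "b + 2 \<le> j" "\<not> j \<le> b + 1 + c1" "j \<le> b + 1 + c2"
    using j by linarith
  then show thesis
  proof cases
    case 1
    then have "{c \<in> lobster_cells b c1 c2. snd c = j} = {(2, j)}"
      using j unfolding lobster_cells_def by auto
    then show thesis using that(1) by blast
  next
    case 2
    then have "{c \<in> lobster_cells b c1 c2. snd c = j} = {(1, j), (3, j)}"
      unfolding lobster_cells_def by auto
    then show thesis using that(2) by blast
  next
    case 3
    then have "{c \<in> lobster_cells b c1 c2. snd c = j} = {(3, j)}"
      unfolding lobster_cells_def by auto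
    then show thesis using that(1) by blast
  next
    case 4
    then have "{c \<in> lobster_cells b c1 c2. snd c = j} = {(1, j)}"
      unfolding lobster_cells_def by auto
    then show thesis using that(1) by blast
  qed
qed

lemma lobster_same_column:
  assumes "x \<in> lobster_cells b c1 c2" "y \<in> lobster_cells b c1 c2"
    and "fst x < fst y" and "snd x = snd y"
  shows "fst x = 1 \<and> fst y = 3"
  using assms unfolding lobster_cells_def by auto

lemma minimal_SET_column_consecutive:
  assumes min: "minimal_SET D T"
    and vertical_pairs: "\<And>x y. x \<in> D \<Longrightarrow> y \<in> D \<Longrightarrow> fst x < fst y \<Longrightarrow> snd x = snd y
      \<Longrightarrow> fst x = r \<and> fst y = r'"
    and bot: "(r, j) \<in> D" and top: "(r', j) \<in> D" and "r < r'"
  shows "T (r', j) = Suc (T (r, j))"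
proof -
  have T: "T \<in> SET D"
    using min unfolding minimal_SET_def by blast
  have "row_of D T (T (r, j)) < row_of D T (T (r', j))" "T (r, j) < T (r', j)"
    using row_of_SET[OF T] SET_column_less[OF T] bot top \<open>r < r'\<close> by force+
  then obtain i where i: "T (r, j) \<le> i" "i < T (r', j)" "row_of D T i < row_of D T (Suc i)"
    using exists_ascent_between[of "T (r, j)" "T (r', j)" "row_of D T"] by auto
  have "T (r, j) \<in> {1..card D}" "T (r', j) \<in> {1..card D}"
    using bot top SET_image[OF T] by blast+
  then have "i \<in> T ` D" "Suc i \<in> T ` D"
    using i(1,2) SET_image[OF T] by auto
  then obtain x y where x: "x \<in> D" "T x = i" and y: "y \<in> D" "T y = Suc i"
    by (metis imageE)
  have "fst x < fst y"
    using i(3) row_of_SET[OF T x(1)] row_of_SET[OF T y(1)] x(2) y(2) by simp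
  moreover have "snd x = snd y"
    using minimal_SET_ascent_same_column[OF min x(1) y(1) x(2) y(2) \<open>fst x < fst y\<close>] .
  ultimately obtain j' where x': "x = (r, j')" and y': "y = (r', j')"
    using vertical_pairs[OF x(1) y(1)] by (metis prod.collapse)
  have "j' = j"
  proof (rule linorder_cases[of j' j])
    assume "j' < j"
    then have "T x < T (r, j)"
      using SET_row_less[OF T] x(1) bot x' by blast
    then show ?thesis using i(1) x(2) by simp
  next
    assume "j < j'"
    then have "T (r', j) < T y"
      using SET_row_less[OF T] y(1) top y' by blast
    then show ?thesis using i(2) y(2) by simp
  qed
  then show ?thesis
    using x y x' y' by simp
qed

theorem lemma5p5:
  fixes b c1 c2 :: nat and T :: filling
  assumes "0 < b" and "0 < c1" and "0 < c2"
    and "minimal_SET (lobster_cells b c1 c2) T"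
  shows "\<forall>j \<in> snd ` lobster_cells b c1 c2.
           \<exists>m n. T ` {c \<in> lobster_cells b c1 c2. snd c = j} = {m..n}"
proof
  fix j
  assume "j \<in> snd ` lobster_cells b c1 c2"
  then show "\<exists>m n. T ` {c \<in> lobster_cells b c1 c2. snd c = j} = {m..n}"
  proof (cases rule: lobster_column_cases)
    case (1 p)
    then have "T ` {c \<in> lobster_cells b c1 c2. snd c = j} = {T p..T p}"
      by simp
    then show ?thesis by blast
  next
    case 2
    then have "(1, j) \<in> lobster_cells b c1 c2" "(3, j) \<in> lobster_cells b c1 c2"
      by blast+
    then have "T (3, j) = Suc (T (1, j))"
      by (intro minimal_SET_column_consecutive[OF assms(4)] lobster_same_column) simp_all
    then have "T ` {c \<in> lobster_cells b c1 c2. snd c = j} = {T (1, j)..Suc (T (1, j))}"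
      using 2 by auto
    then show ?thesis by blast
  qed
qed

end
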